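(* Let $L$ be a finite distributive lattice, let $m$ be the maximum size of an antichain in $\operatorname{Mi}(L)$, and put $Q_L(x)=\sum_{k=0}^m q_k(L)x^k$ and $D_L^-(x)=\sum_{k=0}^m d_k^-(L)x^k$. Then $Q_L(x)=D_L^-(1+x)$.
   Context: $\operatorname{Mi}(L)$ is the set of meet-irreducible elements of $L$, as a poset under the order of $L$. For a finite lattice $M$ and $k\ge0$, $q_k(M)$ is the number of convex sublattices (intervals) of $M$ isomorphic to the Boolean lattice $\mathbf{B}_k$ with $2^k$ elements. For $a\in M$, $\deg^-_M(a)$ is the number of elements of $M$ covering $a$, and $d_k^-(M)$ is the number of $a\in M$ with $\deg^-_M(a)=k$. *)

theory Defs
  imports "HOL-Computational_Algebra.Polynomial"
begin

definition Mi :: "'a::lattice set" where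
  "Mi = {a. (\<exists>b. a < b) \<and> (\<forall>b c. a = inf b c \<longrightarrow> a = b \<or> a = c)}"

definition antichain_in :: "'a::order set \<Rightarrow> bool" where
  "antichain_in A \<longleftrightarrow> (\<forall>x\<in>A. \<forall>y\<in>A. x \<le> y \<longrightarrow> x = y)"

definition width :: "'a::order set \<Rightarrow> nat" where
  "width P = Max {card A | A. A \<subseteq> P \<and> antichain_in A}"

definition convex_sublattice :: "'a::lattice set \<Rightarrow> bool" where
  "convex_sublattice S \<longleftrightarrow> S \<noteq> {}
     \<and> (\<forall>x\<in>S. \<forall>y\<in>S. inf x y \<in> S \<and> sup x y \<in> S)
     \<and> (\<forall>x\<in>S. \<forall>y\<in>S. \<forall>z. x \<le> z \<and> z \<le> y \<longrightarrow> z \<in> S)"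

definition iso_Boolean :: "'a::order set \<Rightarrow> nat \<Rightarrow> bool" where
  "iso_Boolean S k \<longleftrightarrow> (\<exists>f. bij_betw f S (Pow {0..<k}) \<and>
      (\<forall>x\<in>S. \<forall>y\<in>S. x \<le> y \<longleftrightarrow> f x \<subseteq> f y))"

definition q :: "nat \<Rightarrow> 'a::{finite,lattice} itself \<Rightarrow> nat" where
  "q k _ = card {S :: 'a set. convex_sublattice S \<and> iso_Boolean S k}"

definition covers :: "'a::order \<Rightarrow> 'a \<Rightarrow> bool" where
  "covers a b \<longleftrightarrow> a < b \<and> \<not> (\<exists>c. a < c \<and> c < b)"

definition deg_minus :: "'a::{finite,order} \<Rightarrow> nat" where
  "deg_minus a = card {b. covers a b}"

definition d_minus :: "nat \<Rightarrow> 'a::{finite,order} itself \<Rightarrow> nat" where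
  "d_minus k _ = card {a :: 'a. deg_minus a = k}"

end

theory Submission
  imports Defs
begin

text \<open>
  In a finite distributive lattice the Boolean intervals are exactly the intervals
  [a, a \<squnion> \<Squnion>C] with C a set of upper covers of a, and z \<mapsto> {c \<in> C. c \<le> z}
  identifies such an interval with the power set of C; distributivity is what makes the
  covers below z join back to z. Hence intervals isomorphic to B_k correspond
  bijectively to pairs (a, C) with |C| = k, so q_k(L) is the sum over a of
  binomial(deg(a), k), and summing (1 + x)^deg(a) over a gives Q_L(x) = D_L(1 + x).
  Truncating at the width m of Mi(L) loses nothing: for each upper cover b of a, a
  meet-irreducible element above a \<squnion> \<Squnion>(covers of a other than b) but not above b
  exists, and these elements form an antichain, so deg(a) \<le> m.
\<close>

definition cover_join :: "'a::lattice \<Rightarrow> 'a set \<Rightarrow> 'a" where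
  "cover_join a C = Sup_fin (insert a C)"

lemma cover_join_le_iff:
  "finite C \<Longrightarrow> cover_join a C \<le> x \<longleftrightarrow> a \<le> x \<and> (\<forall>c\<in>C. c \<le> x)"
  unfolding cover_join_def by (simp add: Sup_fin.bounded_iff)

lemma cover_join_upper:
  assumes "finite C"
  shows "a \<le> cover_join a C" and "c \<in> C \<Longrightarrow> c \<le> cover_join a C"
  using assms unfolding cover_join_def by (simp_all add: Sup_fin.coboundedI)

lemma cover_join_mono:
  "finite C \<Longrightarrow> D \<subseteq> C \<Longrightarrow> cover_join a D \<le> cover_join a C"
  by (simp add: cover_join_le_iff cover_join_upper finite_subset subset_iff)

lemma inf_cover_cases:
  fixes a :: "'a::lattice"
  assumes "covers a c" "a \<le> z"
  shows "inf z c = a \<or> inf z c = c"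
  using assms unfolding covers_def by (metis inf.bounded_iff inf.strict_order_iff inf_le2 order_le_less)

lemma inf_cover_join:
  fixes a :: "'a::distrib_lattice"
  assumes C: "finite C" "\<forall>c\<in>C. covers a c" and "a \<le> z"
  shows "inf z (cover_join a C) = cover_join a {c\<in>C. c \<le> z}"
proof -
  have "inf z c = (if c \<le> z then c else a)" if "c \<in> C" for c
    using inf_cover_cases[of a c z] C that \<open>a \<le> z\<close> by (auto simp: inf.absorb2 inf.absorb_iff2)
  moreover have "inf z a = a"
    using \<open>a \<le> z\<close> by (simp add: inf.absorb2)
  ultimately have "{inf z x |x. x \<in> insert a C} = insert a {c\<in>C. c \<le> z}"
    by (auto split: if_splits) force+
  then show ?thesis
    unfolding cover_join_def using C by (simp add: inf_Sup1_distrib)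
qed

lemma cover_join_covers_below:
  fixes a :: "'a::distrib_lattice"
  assumes "finite C" "\<forall>c\<in>C. covers a c" "z \<in> {a..cover_join a C}"
  shows "cover_join a {c\<in>C. c \<le> z} = z"
  using inf_cover_join[OF assms(1,2), of z] assms(3) by (simp add: inf.absorb1)

lemma cover_le_cover_join_iff:
  fixes a :: "'a::distrib_lattice"
  assumes C: "finite C" "\<forall>c\<in>C. covers a c" and c: "covers a c"
  shows "c \<le> cover_join a C \<longleftrightarrow> c \<in> C"
proof
  assume c_le: "c \<le> cover_join a C"
  show "c \<in> C"
  proof (rule ccontr)
    assume "c \<notin> C"
    then have no_cover_below: "{x\<in>C. x \<le> c} = {}"
      using C(2) c unfolding covers_def by (auto simp: order.order_iff_strict)
    have "cover_join a {x\<in>C. x \<le> c} = a"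
      unfolding no_cover_below cover_join_def by simp
    moreover have "cover_join a {x\<in>C. x \<le> c} = c"
      using cover_join_covers_below[OF C, of c] c c_le unfolding covers_def by (simp add: less_imp_le)
    ultimately show False
      using c unfolding covers_def by simp
  qed
qed (simp add: C cover_join_upper)

locale Pow_iso =
  fixes S :: "'a::order set" and K :: "'b set" and f :: "'a \<Rightarrow> 'b set"
  assumes bij: "bij_betw f S (Pow K)"
    and le_iff: "x \<in> S \<Longrightarrow> y \<in> S \<Longrightarrow> x \<le> y \<longleftrightarrow> f x \<subseteq> f y"
begin

definition elem :: "'b set \<Rightarrow> 'a" where
  "elem D = the_inv_into S f D"

lemma elem_in: "D \<subseteq> K \<Longrightarrow> elem D \<in> S"
  using bij_betw_the_inv_into[OF bij] unfolding elem_def bij_betw_def by auto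

lemma f_elem: "D \<subseteq> K \<Longrightarrow> f (elem D) = D"
  using f_the_inv_into_f_bij_betw[OF bij] unfolding elem_def by auto

lemma elem_f: "x \<in> S \<Longrightarrow> elem (f x) = x"
  using the_inv_into_f_f bij unfolding elem_def bij_betw_def by metis

lemma f_subset: "x \<in> S \<Longrightarrow> f x \<subseteq> K"
  using bij unfolding bij_betw_def by auto

lemma elem_le_iff: "D \<subseteq> K \<Longrightarrow> E \<subseteq> K \<Longrightarrow> elem D \<le> elem E \<longleftrightarrow> D \<subseteq> E"
  using le_iff elem_in f_elem by simp

lemma elem_less_iff: "D \<subseteq> K \<Longrightarrow> E \<subseteq> K \<Longrightarrow> elem D < elem E \<longleftrightarrow> D \<subset> E"
  using elem_le_iff by (simp add: less_le_not_le subset_not_subset_eq)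

lemma subset_interval: "S \<subseteq> {elem {}..elem K}"
  using le_iff elem_in f_elem f_subset by auto

lemma covers_bottom_eq:
  assumes convex: "\<And>z. elem {} \<le> z \<Longrightarrow> z \<le> elem K \<Longrightarrow> z \<in> S"
  shows "{c \<in> S. covers (elem {}) c} = (\<lambda>i. elem {i}) ` K"
proof safe
  fix c assume c: "c \<in> S" "covers (elem {}) c"
  then have "f c \<noteq> {}"
    using elem_f unfolding covers_def by force
  then obtain i where i: "i \<in> f c"
    by blast
  have "i \<in> K"
    using c(1) f_subset i by blast
  then have "elem {i} \<le> c" "elem {} < elem {i}"
    using c(1) i elem_in f_elem le_iff elem_less_iff by auto
  then show "c \<in> (\<lambda>i. elem {i}) ` K"
    using c \<open>i \<in> K\<close> unfolding covers_def by (auto simp: order.order_iff_strict)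
next
  fix i assume i: "i \<in> K"
  show "elem {i} \<in> S"
    using elem_in i by simp
  show "covers (elem {}) (elem {i})"
    unfolding covers_def
  proof (intro conjI notI)
    show "elem {} < elem {i}"
      using i elem_less_iff by auto
  next
    assume "\<exists>y. elem {} < y \<and> y < elem {i}"
    then obtain y where y: "elem {} < y" "y < elem {i}"
      by blast
    have "elem {i} \<le> elem K"
      using i elem_le_iff by simp
    then have "y \<in> S"
      using convex y by (meson less_imp_le order.trans)
    then have "f y \<subseteq> {i}"
      using le_iff elem_in f_elem i y(2) by (metis empty_subsetI insert_subset less_imp_le)
    moreover have "f y \<noteq> {}" "f y \<noteq> {i}"
      using elem_f[OF \<open>y \<in> S\<close>] y by auto
    ultimately show False
      by (auto simp: subset_singleton_iff)
  qed
qed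

lemma inj_on_elem_singleton: "inj_on (\<lambda>i. elem {i}) K"
proof (rule inj_onI)
  fix i j assume "i \<in> K" "j \<in> K" "elem {i} = elem {j}"
  have "f (elem {i}) = f (elem {j})"
    using \<open>elem {i} = elem {j}\<close> by (rule arg_cong)
  then show "i = j"
    using f_elem \<open>i \<in> K\<close> \<open>j \<in> K\<close> by simp
qed

lemma top_le_if_atoms_le:
  assumes "x \<in> S" "\<And>i. i \<in> K \<Longrightarrow> elem {i} \<le> x"
  shows "elem K \<le> x"
proof -
  have "K \<subseteq> f x"
    using assms le_iff[OF elem_in assms(1)] f_elem by fastforce
  then show ?thesis
    using le_iff[OF elem_in assms(1), of K] f_elem[of K] by simp
qed

lemma iso_Boolean_card:
  assumes "finite K"
  shows "iso_Boolean S (card K)"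
proof -
  obtain g where g: "bij_betw g K {0..<card K}"
    using ex_bij_betw_finite_nat[OF assms] by blast
  then have "bij_betw (image g \<circ> f) S (Pow {0..<card K})"
    using bij bij_betw_Pow bij_betw_trans by blast
  moreover have "g ` A \<subseteq> g ` B \<longleftrightarrow> A \<subseteq> B" if "A \<subseteq> K" "B \<subseteq> K" for A B
    using that inj_on_image_mem_iff[OF bij_betw_imp_inj_on[OF g]] by blast
  then have "x \<le> y \<longleftrightarrow> g ` f x \<subseteq> g ` f y" if "x \<in> S" "y \<in> S" for x y
    using le_iff[OF that] f_subset[OF that(1)] f_subset[OF that(2)] by simp
  ultimately show ?thesis
    unfolding iso_Boolean_def comp_def by blast
qed

end

lemma convex_sublattice_interval:
  fixes a :: "'a::lattice"
  shows "a \<le> b \<Longrightarrow> convex_sublattice {a..b}"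
  unfolding convex_sublattice_def by (auto intro: le_supI1 le_infI1 order_trans)

lemma convex_sublatticeD:
  "convex_sublattice S \<Longrightarrow> x \<in> S \<Longrightarrow> y \<in> S \<Longrightarrow> x \<le> z \<Longrightarrow> z \<le> y \<Longrightarrow> z \<in> S"
  unfolding convex_sublattice_def by (elim conjE) blast

lemma cover_interval_Pow_iso:
  fixes a :: "'a::distrib_lattice"
  assumes C: "finite C" "\<forall>c\<in>C. covers a c"
  shows "Pow_iso {a..cover_join a C} C (\<lambda>z. {c\<in>C. c \<le> z})"
proof
  have "{c\<in>C. c \<le> cover_join a D} = D" if "D \<subseteq> C" for D
    using that C cover_le_cover_join_iff[of D a] finite_subset by blast
  moreover have "cover_join a D \<in> {a..cover_join a C}" if "D \<subseteq> C" for D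
    using cover_join_upper(1)[OF finite_subset[OF that C(1)]] cover_join_mono[OF C(1) that]
      cover_join_upper(1)[OF C(1)] by auto
  ultimately show "bij_betw (\<lambda>z. {c\<in>C. c \<le> z}) {a..cover_join a C} (Pow C)"
    using cover_join_covers_below[OF C] by (intro bij_betw_byWitness[where f' = "cover_join a"]) auto
next
  fix x y assume xy: "x \<in> {a..cover_join a C}" "y \<in> {a..cover_join a C}"
  show "x \<le> y \<longleftrightarrow> {c\<in>C. c \<le> x} \<subseteq> {c\<in>C. c \<le> y}"
  proof
    assume "{c\<in>C. c \<le> x} \<subseteq> {c\<in>C. c \<le> y}"
    then have "cover_join a {c\<in>C. c \<le> x} \<le> cover_join a {c\<in>C. c \<le> y}"
      using C by (intro cover_join_mono) auto
    then show "x \<le> y"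
      using cover_join_covers_below[OF C] xy by simp
  qed (auto intro: order_trans)
qed

lemma convex_Boolean_sublattice_cover_interval:
  fixes S :: "'a::lattice set"
  assumes conv: "convex_sublattice S" and iso: "Pow_iso S K f" and "finite K"
  obtains a C where "finite C" "\<forall>c\<in>C. covers a c" "card C = card K" "S = {a..cover_join a C}"
proof -
  interpret Pow_iso S K f
    by (fact iso)
  define a where "a = elem {}"
  define t where "t = elem K"
  define C where "C = (\<lambda>i. elem {i}) ` K"
  have convex: "z \<in> S" if "a \<le> z" "z \<le> t" for z
    using convex_sublatticeD[OF conv elem_in[of "{}"] elem_in[of K]] that unfolding a_def t_def by simp
  have S_eq: "S = {a..t}"
  proof
    show "S \<subseteq> {a..t}"
      using subset_interval unfolding a_def t_def .
    show "{a..t} \<subseteq> S"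
      using convex by auto
  qed
  have C_covers: "C = {c\<in>S. covers a c}"
    unfolding C_def a_def by (rule covers_bottom_eq[OF convex[unfolded a_def t_def], symmetric])
  have card_C: "card C = card K"
    unfolding C_def by (rule card_image[OF inj_on_elem_singleton])
  have fin_C: "finite C"
    unfolding C_def using \<open>finite K\<close> by simp
  have "a \<le> t"
    using elem_le_iff[of "{}" K] unfolding a_def t_def by simp
  then have "cover_join a C \<le> t"
    using S_eq C_covers cover_join_le_iff[OF fin_C] by auto
  then have join_in: "cover_join a C \<in> S"
    using S_eq cover_join_upper(1)[OF fin_C] by simp
  have "t \<le> cover_join a C"
    using top_le_if_atoms_le[OF join_in] cover_join_upper(2)[OF fin_C] unfolding C_def t_def by blast
  with \<open>cover_join a C \<le> t\<close> have "S = {a..cover_join a C}"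
    using S_eq by simp
  moreover have "\<forall>c\<in>C. covers a c"
    using C_covers by blast
  ultimately show thesis
    using that fin_C card_C by blast
qed

lemma convex_Boolean_sublattice_iff:
  fixes S :: "'a::distrib_lattice set"
  shows "convex_sublattice S \<and> iso_Boolean S k \<longleftrightarrow>
    (\<exists>a C. finite C \<and> (\<forall>c\<in>C. covers a c) \<and> card C = k \<and> S = {a..cover_join a C})"
proof
  assume "convex_sublattice S \<and> iso_Boolean S k"
  moreover from this obtain f where "Pow_iso S {0..<k} f"
    unfolding iso_Boolean_def Pow_iso_def by blast
  ultimately obtain a C where "finite C" "\<forall>c\<in>C. covers a c" "card C = card {0..<k}"
      "S = {a..cover_join a C}"
    using convex_Boolean_sublattice_cover_interval[of S "{0..<k}" f] by blast
  then show "\<exists>a C. finite C \<and> (\<forall>c\<in>C. covers a c) \<and> card C = k \<and> S = {a..cover_join a C}"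
    by auto
next
  assume "\<exists>a C. finite C \<and> (\<forall>c\<in>C. covers a c) \<and> card C = k \<and> S = {a..cover_join a C}"
  then obtain a C where C: "finite C" "\<forall>c\<in>C. covers a c" and "card C = k"
    and S: "S = {a..cover_join a C}"
    by blast
  have "convex_sublattice S"
    unfolding S by (rule convex_sublattice_interval[OF cover_join_upper(1)[OF C(1)]])
  moreover have "iso_Boolean S k"
    using Pow_iso.iso_Boolean_card[OF cover_interval_Pow_iso[OF C] C(1)] S \<open>card C = k\<close> by simp
  ultimately show "convex_sublattice S \<and> iso_Boolean S k" ..
qed

lemma cover_interval_eq_iff:
  fixes a a' :: "'a::distrib_lattice"
  assumes C: "finite C" "\<forall>c\<in>C. covers a c" and C': "finite C'" "\<forall>c\<in>C'. covers a' c"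
  shows "{a..cover_join a C} = {a'..cover_join a' C'} \<longleftrightarrow> a = a' \<and> C = C'"
proof
  assume "{a..cover_join a C} = {a'..cover_join a' C'}"
  then have "a = a'" and top: "cover_join a C = cover_join a' C'"
    using cover_join_upper(1)[OF C(1)] by auto
  have "C = {c. covers a c \<and> c \<le> cover_join a C}" "C' = {c. covers a' c \<and> c \<le> cover_join a' C'}"
    using cover_le_cover_join_iff[OF C] cover_le_cover_join_iff[OF C'] C(2) C'(2) by auto
  with \<open>a = a'\<close> top show "a = a' \<and> C = C'"
    by simp
qed simp

lemma card_convex_Boolean_sublattices:
  fixes L :: "'a::{finite,distrib_lattice} itself"
  shows "q k L = (\<Sum>a\<in>UNIV. deg_minus (a::'a) choose k)"
proof -
  define P where "P = Sigma (UNIV::'a set) (\<lambda>a. {C. C \<subseteq> {b. covers a b} \<and> card C = k})"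
  define interval :: "'a \<times> 'a set \<Rightarrow> 'a set" where "interval = (\<lambda>(a, C). {a..cover_join a C})"
  have "{S::'a set. convex_sublattice S \<and> iso_Boolean S k} = interval ` P"
    unfolding convex_Boolean_sublattice_iff P_def interval_def by auto
  moreover have "inj_on interval P"
  proof (rule inj_onI)
    fix x y assume "x \<in> P" "y \<in> P" "interval x = interval y"
    moreover obtain a C a' C' where "x = (a, C)" "y = (a', C')"
      by fastforce
    ultimately show "x = y"
      using cover_interval_eq_iff[of C a C' a'] unfolding P_def interval_def
      by (auto simp del: Icc_eq_Icc)
  qed
  ultimately have "q k L = card P"
    unfolding q_def by (simp add: card_image)
  also have "\<dots> = (\<Sum>a\<in>UNIV. card {C. C \<subseteq> {b. covers (a::'a) b} \<and> card C = k})"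
    unfolding P_def by simp
  finally show ?thesis
    unfolding deg_minus_def by (simp add: n_subsets)
qed

lemma Mi_above:
  fixes x b :: "'a::{finite,lattice}"
  assumes "\<not> b \<le> x"
  obtains m where "m \<in> Mi" "x \<le> m" "\<not> b \<le> m"
proof -
  obtain m where m: "\<not> b \<le> m" "x \<le> m" and maximal: "\<And>y. m \<le> y \<Longrightarrow> \<not> b \<le> y \<Longrightarrow> m = y"
    using finite_has_maximal2[of "{y. \<not> b \<le> y}" x] assms by auto
  have "m \<in> Mi"
    unfolding Mi_def
  proof (intro CollectI conjI allI impI)
    have "m \<noteq> sup m b"
      using m(1) by (metis sup_ge2)
    then show "\<exists>y. m < y"
      using sup_ge1 order.not_eq_order_implies_strict by blast
  next
    fix y z assume m_inf: "m = inf y z"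
    show "m = y \<or> m = z"
    proof (rule ccontr)
      assume "\<not> (m = y \<or> m = z)"
      moreover have "m \<le> y" "m \<le> z"
        using m_inf by simp_all
      ultimately have "b \<le> y" "b \<le> z"
        using maximal by blast+
      then show False
        using m(1) m_inf by simp
    qed
  qed
  with m that show thesis
    by blast
qed

lemma card_le_width:
  fixes P :: "'a::{finite,order} set"
  assumes "A \<subseteq> P" "antichain_in A"
  shows "card A \<le> width P"
proof -
  have "finite {card A | A. A \<subseteq> P \<and> antichain_in A}"
    using finite_subset[of _ "card ` UNIV"] by auto
  then show ?thesis
    unfolding width_def using assms by (intro Max_ge) auto
qed

lemma deg_minus_le_width:
  fixes a :: "'a::{finite,distrib_lattice}"
  shows "deg_minus a \<le> width (Mi :: 'a set)"
proof -
  define B where "B = {b. covers a b}"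
  have "\<not> b \<le> cover_join a (B - {b})" if "b \<in> B" for b
    using cover_le_cover_join_iff[of "B - {b}" a b] that unfolding B_def by auto
  then have "\<forall>b\<in>B. \<exists>m. m \<in> Mi \<and> cover_join a (B - {b}) \<le> m \<and> \<not> b \<le> m"
    by (metis Mi_above)
  then obtain m where m: "\<And>b. b \<in> B \<Longrightarrow> m b \<in> Mi \<and> cover_join a (B - {b}) \<le> m b \<and> \<not> b \<le> m b"
    by metis
  have "b = b'" if "b \<in> B" "b' \<in> B" "m b \<le> m b'" for b b'
  proof (rule ccontr)
    assume "b \<noteq> b'"
    then have "b' \<le> cover_join a (B - {b})"
      using cover_join_upper(2)[of "B - {b}" b' a] that by simp
    then have "b' \<le> m b'"
      using m[OF that(1)] that(3) by (blast intro: order.trans)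
    then show False
      using m[OF that(2)] by simp
  qed
  then have "inj_on m B" "antichain_in (m ` B)"
    unfolding antichain_in_def by (auto intro: inj_onI)
  moreover have "m ` B \<subseteq> Mi"
    using m by blast
  ultimately show ?thesis
    unfolding deg_minus_def B_def[symmetric] using card_le_width card_image by metis
qed

lemma pcompose_power: "pcompose (p ^ n) r = pcompose p r ^ n"
  by (induct n) (simp_all add: pcompose_mult pcompose_1)

lemma pcompose_monom: "pcompose (monom c n) r = smult c (r ^ n)"
  by (simp add: monom_altdef pcompose_smult pcompose_power pcompose_pCons)

lemma one_plus_X_power:
  assumes "n \<le> m"
  shows "[:1, 1:] ^ n = (\<Sum>k\<le>m. monom (of_nat (n choose k)) k :: 'a::comm_semiring_1 poly)"
proof -
  have "[:1, 1:] ^ n = ([:0, 1:] + 1 :: 'a poly) ^ n"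
    by (simp add: one_pCons)
  also have "\<dots> = (\<Sum>k\<le>n. monom (of_nat (n choose k)) k)"
    unfolding binomial_ring by (simp add: monom_altdef of_nat_mult_conv_smult)
  also have "\<dots> = (\<Sum>k\<le>m. monom (of_nat (n choose k)) k)"
    using assms by (intro sum.mono_neutral_left) (auto simp: binomial_eq_0)
  finally show ?thesis .
qed

lemma pcompose_one_plus_X_counts:
  fixes g :: "'b \<Rightarrow> nat"
  assumes "finite A" "\<forall>x\<in>A. g x \<le> m"
  shows "pcompose (\<Sum>k\<le>m. monom (of_nat (card {x\<in>A. g x = k})) k) [:1, 1:]
    = (\<Sum>k\<le>m. monom (of_nat (\<Sum>x\<in>A. g x choose k)) k :: 'a::comm_semiring_1 poly)"
proof -
  have "pcompose (\<Sum>k\<le>m. monom (of_nat (card {x\<in>A. g x = k})) k) [:1, 1:]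
      = (\<Sum>k\<le>m. \<Sum>x\<in>{x\<in>A. g x = k}. [:1, 1 :: 'a:] ^ g x)"
    by (simp add: pcompose_sum pcompose_monom of_nat_mult_conv_smult)
  also have "\<dots> = (\<Sum>x\<in>A. [:1, 1:] ^ g x)"
    using assms by (intro sum.group) auto
  also have "\<dots> = (\<Sum>x\<in>A. \<Sum>k\<le>m. monom (of_nat (g x choose k)) k)"
    using assms(2) one_plus_X_power by (intro sum.cong) auto
  also have "\<dots> = (\<Sum>k\<le>m. monom (of_nat (\<Sum>x\<in>A. g x choose k)) k)"
    by (subst sum.swap) (simp add: monom_sum)
  finally show ?thesis .
qed

theorem corollary8:
  fixes L :: "'a::{finite, distrib_lattice} itself"
  defines "m \<equiv> width (Mi :: 'a set)"
  shows "(\<Sum>k\<le>m. monom (int (q k L)) k)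
         = pcompose (\<Sum>k\<le>m. monom (int (d_minus k L)) k) [:1, 1:]"
proof -
  have "\<forall>a::'a. deg_minus a \<le> m"
    unfolding m_def using deg_minus_le_width by blast
  then show ?thesis
    using pcompose_one_plus_X_counts[of "UNIV :: 'a set" deg_minus m, where 'a = int]
    unfolding d_minus_def card_convex_Boolean_sublattices by simp
qed

end
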